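(* Let $D=\{(x,z):\ -1<z<0,\ -1<x<z+1\}$, and for $\lambda\in(\tfrac12,\tfrac45)$ let $a=\sqrt{\lambda/(1-\lambda)}$, $P(\lambda)=\{(x,z):\ a-3+\tfrac1a<z-\tfrac{x}{a}<1-a+\tfrac1a,\ 1-a-\tfrac1a<z+\tfrac{x}{a}<a-1-\tfrac1a\}$ and $\chi(x,z,\lambda)$ the indicator of $P(\lambda)$ in $D$. Let $\tfrac12<\lambda_*<\lambda_{**}<\tfrac45$, $\sigma_0\in C^1[\tfrac12,\tfrac45]$, $\psi(x,z,t)=\int_{\lambda_*}^{\lambda_{**}}\cos(\sqrt\lambda\,t)\sigma_0(\lambda)\chi(x,z,\lambda)\,d\lambda$, and $\mathbf U=(u,v,w)$ with $u=-\psi_z$, $v=\int_0^t\psi_z(x,z,s)\,ds$, $w=\psi_x$. For $\mu\in[\lambda_*,\lambda_{**}]$ let $CA(\mu),AB(\mu),BD(\mu),DC(\mu)$ be the sides of $\overline{P(\mu)}$ lying on the lines $z=1+\frac xa+\frac1a-a$, $z=1-\frac xa-\frac1a-a$, $z=\frac xa+\frac1a+a-3$, $z=-\frac xa-\frac1a+a-1$ respectively ($a=a(\mu)$), and let $\Sigma_{CA}=\bigcup_{\mu\in[\lambda_*,\lambda_{**}]}CA(\mu)$, and similarly $\Sigma_{AB},\Sigma_{BD},\Sigma_{DC}$. Let $D_1,D_2,D_3,D_4$ be the interiors of $\Sigma_{CA}\cap\Sigma_{DC}$, $\Sigma_{CA}\cap\Sigma_{AB}$, $\Sigma_{AB}\cap\Sigma_{BD}$,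 $\Sigma_{BD}\cap\Sigma_{DC}$, and let $\Omega_0$ be the interior of $D\setminus(D_1\cup D_2\cup D_3\cup D_4)$ (equivalently $\Omega_0$ is, up to the common boundaries, $\bigcup_{i=5}^{13}D_i$). Then $\mathbf U$ has property $S$ in $\Omega_0$: for every Lipschitz subdomain $\Omega_1\subset\Omega_0$ the quantity $\int_{\Omega_1}(|u|^2+|v|^2+|w|^2)\,dx\,dz$ does not depend on $t$.
   Context: In the paper, $S(\lambda_* )=\partial P(\lambda_* )$ and $S(\lambda_{**})=\partial P(\lambda_{**})$ divide $D$ into subdomains $D_1,\dots,D_{13}$: $D_1,\dots,D_4$ are the four corner regions where two of the swept strips of sides overlap, $D_5,\dots,D_8$ are the parts of the four strips swept by a single side, and $D_9,\dots,D_{13}$ are the regions not met by any $S(\mu)$, $\mu\in[\lambda_*,\lambda_{**}]$. $\mathbf U$ is the velocity field (inertial wave) of the linearized rotating-fluid system $u_t=v-p_x$, $v_t=-u$, $w_t=-p_z$, $u_x+w_z=0$ with no-flux boundary condition, associated with the stream function $\psi$. *)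

theory Defs
  imports "HOL-Analysis.Analysis"
begin

definition aa :: "real \<Rightarrow> real" where
  "aa l = sqrt (l / (1 - l))"

definition Dom :: "(real \<times> real) set" where
  "Dom = {(x, z). -1 < z \<and> z < 0 \<and> -1 < x \<and> x < z + 1}"

definition Pset :: "real \<Rightarrow> (real \<times> real) set" where
  "Pset l = {(x, z). aa l - 3 + 1 / aa l < z - x / aa l \<and> z - x / aa l < 1 - aa l + 1 / aa l
                   \<and> 1 - aa l - 1 / aa l < z + x / aa l \<and> z + x / aa l < aa l - 1 - 1 / aa l}"

definition chi :: "real \<Rightarrow> real \<Rightarrow> real \<Rightarrow> real" where
  "chi x z l = indicator (Pset l \<inter> Dom) (x, z)"

definition psi :: "real \<Rightarrow> real \<Rightarrow> (real \<Rightarrow> real) \<Rightarrow> real \<Rightarrow> real \<Rightarrow> real \<Rightarrow> real" where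
  "psi ls lss \<sigma>0 x z t = integral {ls..lss} (\<lambda>l. cos (sqrt l * t) * \<sigma>0 l * chi x z l)"

definition uvel :: "real \<Rightarrow> real \<Rightarrow> (real \<Rightarrow> real) \<Rightarrow> real \<Rightarrow> real \<Rightarrow> real \<Rightarrow> real" where
  "uvel ls lss \<sigma>0 x z t = - deriv (\<lambda>z'. psi ls lss \<sigma>0 x z' t) z"

definition vvel :: "real \<Rightarrow> real \<Rightarrow> (real \<Rightarrow> real) \<Rightarrow> real \<Rightarrow> real \<Rightarrow> real \<Rightarrow> real" where
  "vvel ls lss \<sigma>0 x z t = (LBINT s=0..t. deriv (\<lambda>z'. psi ls lss \<sigma>0 x z' s) z)"

definition wvel :: "real \<Rightarrow> real \<Rightarrow> (real \<Rightarrow> real) \<Rightarrow> real \<Rightarrow> real \<Rightarrow> real \<Rightarrow> real" where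
  "wvel ls lss \<sigma>0 x z t = deriv (\<lambda>x'. psi ls lss \<sigma>0 x' z t) x"

definition C1_on_closed :: "real set \<Rightarrow> (real \<Rightarrow> real) \<Rightarrow> bool" where
  "C1_on_closed S f \<longleftrightarrow> (\<exists>D. (\<forall>x\<in>S. (f has_real_derivative D x) (at x within S)) \<and> continuous_on S D)"

definition side_CA :: "real \<Rightarrow> (real \<times> real) set" where
  "side_CA m = {q \<in> closure (Pset m). snd q = 1 + fst q / aa m + 1 / aa m - aa m}"
definition side_AB :: "real \<Rightarrow> (real \<times> real) set" where
  "side_AB m = {q \<in> closure (Pset m). snd q = 1 - fst q / aa m - 1 / aa m - aa m}"
definition side_BD :: "real \<Rightarrow> (real \<times> real) set" where
  "side_BD m = {q \<in> closure (Pset m). snd q = fst q / aa m + 1 / aa m + aa m - 3}"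
definition side_DC :: "real \<Rightarrow> (real \<times> real) set" where
  "side_DC m = {q \<in> closure (Pset m). snd q = - fst q / aa m - 1 / aa m + aa m - 1}"

definition Omega0 :: "real \<Rightarrow> real \<Rightarrow> (real \<times> real) set" where
  "Omega0 ls lss = (let
      SCA = (\<Union>m\<in>{ls..lss}. side_CA m); SAB = (\<Union>m\<in>{ls..lss}. side_AB m);
      SBD = (\<Union>m\<in>{ls..lss}. side_BD m); SDC = (\<Union>m\<in>{ls..lss}. side_DC m);
      D1 = interior (SCA \<inter> SDC); D2 = interior (SCA \<inter> SAB);
      D3 = interior (SAB \<inter> SBD); D4 = interior (SBD \<inter> SDC)
    in interior (Dom - (D1 \<union> D2 \<union> D3 \<union> D4)))"

definition rot :: "real \<Rightarrow> real \<times> real \<Rightarrow> real \<times> real" where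
  "rot th q = (cos th * fst q + sin th * snd q, - sin th * fst q + cos th * snd q)"

definition lipschitz_domain :: "(real \<times> real) set \<Rightarrow> bool" where
  "lipschitz_domain \<Omega> \<longleftrightarrow> open \<Omega> \<and> connected \<Omega> \<and> bounded \<Omega> \<and> \<Omega> \<noteq> {} \<and>
     (\<forall>p\<in>frontier \<Omega>. \<exists>r>0. \<exists>ang L g. lipschitz_on L UNIV (g :: real \<Rightarrow> real) \<and>
        (\<forall>q\<in>ball p r. (q \<in> \<Omega>) = (g (fst (rot ang (q - p))) < snd (rot ang (q - p)))))"

end

theory Submission
  imports Defs
begin

text \<open>A point \<open>q\<close> of \<open>D\<close> lies in \<open>P(\<lambda>)\<close> exactly for \<open>\<lambda>\<close> in an interval \<open>(lam_lo q, lam_hi q)\<close>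
  whose endpoints are the parameters at which a side line of the rectangle passes through \<open>q\<close>.
  Hence \<open>\<psi> = \<Phi>\<^sub>t(clamp lam_hi) - \<Phi>\<^sub>t(clamp (min lam_lo lam_hi))\<close>, with \<open>\<Phi>\<^sub>t\<close> a primitive of
  \<open>cos(\<surd>\<lambda> t) \<sigma>\<^sub>0(\<lambda>)\<close> and the clamp to \<open>[\<lambda>\<^sub>*, \<lambda>\<^sub>*\<^sub>*]\<close>. Off the null set of side lines for
  \<open>\<lambda>\<^sub>*\<close> and \<open>\<lambda>\<^sub>*\<^sub>*\<close>, near a point of \<open>\<Omega>\<^sub>0\<close> at most one clamped endpoint varies, so locally
  \<open>\<psi> = C(t)\<close> or \<open>\<psi> = \<epsilon> \<Phi>\<^sub>t(M(x,z)) + C(t)\<close> for one side parameter \<open>M\<close>. In the first case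
  \<open>U = 0\<close>; in the second \<open>M\<close> satisfies \<open>M (\<partial>\<^sub>x M)\<^sup>2 = (1 - M) (\<partial>\<^sub>z M)\<^sup>2\<close>, which makes
  \<open>|U|\<^sup>2 = \<epsilon>\<^sup>2 \<sigma>\<^sub>0(M)\<^sup>2 (\<partial>\<^sub>z M)\<^sup>2 / M\<close> independent of \<open>t\<close>. So the two integrands agree almost
  everywhere.\<close>

section \<open>Side parameters of a point\<close>

definition quad_root :: "real \<Rightarrow> real \<Rightarrow> real" where
  "quad_root b c = (b + sqrt (b\<^sup>2 + c)) / 2"

lemma quad_sign_if_neg_at_one:
  assumes neg: "1 - b - c/4 < 0" and a: "1 \<le> a"
  shows "a\<^sup>2 - b*a - c/4 < 0 \<longleftrightarrow> a < quad_root b c"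
    and "a\<^sup>2 - b*a - c/4 \<le> 0 \<longleftrightarrow> a \<le> quad_root b c"
    and "0 < b\<^sup>2 + c" and "1 < quad_root b c"
proof -
  have "b\<^sup>2 + c = (b-2)\<^sup>2 + 4*(b + c/4 - 1)" by (simp add: algebra_simps power2_eq_square)
  then show disc: "0 < b\<^sup>2 + c" using neg by (smt (verit) zero_le_power2)
  define S where "S = sqrt (b\<^sup>2 + c)"
  have S: "S > 0" "S\<^sup>2 = b\<^sup>2 + c" using disc by (auto simp: S_def)
  have factor: "y\<^sup>2 - b*y - c/4 = (y - (b+S)/2) * (y - (b-S)/2)" for y
    using S by (simp add: algebra_simps power2_eq_square; simp add: field_simps)
  have root: "quad_root b c = (b+S)/2" by (simp add: quad_root_def S_def)
  have "(1 - (b+S)/2) * (1 - (b-S)/2) < 0" using neg factor[of 1] by simp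
  then have roots: "(b-S)/2 < 1" "1 < (b+S)/2" using S by (auto simp: mult_less_0_iff)
  then show "1 < quad_root b c" using root by simp
  have "a - (b-S)/2 > 0" using roots a by simp
  then show "a\<^sup>2 - b*a - c/4 < 0 \<longleftrightarrow> a < quad_root b c"
    and "a\<^sup>2 - b*a - c/4 \<le> 0 \<longleftrightarrow> a \<le> quad_root b c"
    unfolding factor root by (simp_all add: mult_less_0_iff mult_le_0_iff)
qed

lemma quad_sign_if_vertex_lt_one:
  assumes b: "b < 2" and a: "1 \<le> a"
  shows "0 < a\<^sup>2 - b*a - c/4 \<longleftrightarrow> quad_root b c < a"
    and "0 \<le> a\<^sup>2 - b*a - c/4 \<longleftrightarrow> quad_root b c \<le> a"
    and "1 < quad_root b c \<Longrightarrow> 0 < b\<^sup>2 + c"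
proof -
  define S where "S = sqrt (b\<^sup>2 + c)"
  have root: "quad_root b c = (b+S)/2" by (simp add: quad_root_def S_def)
  show "1 < quad_root b c \<Longrightarrow> 0 < b\<^sup>2 + c"
  proof -
    assume "1 < quad_root b c"
    then have "0 < S" using b root by simp
    then show ?thesis by (simp add: S_def)
  qed
  have "(0 < a\<^sup>2 - b*a - c/4 \<longleftrightarrow> quad_root b c < a) \<and> (0 \<le> a\<^sup>2 - b*a - c/4 \<longleftrightarrow> quad_root b c \<le> a)"
  proof (cases "0 \<le> b\<^sup>2 + c")
    case True
    have S: "S \<ge> 0" "S\<^sup>2 = b\<^sup>2 + c" using True by (auto simp: S_def)
    have factor: "a\<^sup>2 - b*a - c/4 = (a - (b+S)/2) * (a - (b-S)/2)"
      using S by (simp add: algebra_simps power2_eq_square; simp add: field_simps)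
    have "a - (b-S)/2 > 0" using S a b by simp
    then show ?thesis unfolding factor root by (auto simp: zero_less_mult_iff zero_le_mult_iff)
  next
    case False
    have "a\<^sup>2 - b*a - c/4 = (a - b/2)\<^sup>2 - (b\<^sup>2 + c)/4" by (simp add: algebra_simps power2_eq_square)
    moreover have "0 \<le> (a - b/2)\<^sup>2" "(b\<^sup>2 + c)/4 < 0" using False by simp_all
    ultimately have pos: "0 < a\<^sup>2 - b*a - c/4" by linarith
    have "S < 0" using False by (simp add: S_def)
    then have "quad_root b c < a" using a b unfolding root by simp
    with pos show ?thesis by simp
  qed
  then show "0 < a\<^sup>2 - b*a - c/4 \<longleftrightarrow> quad_root b c < a" "0 \<le> a\<^sup>2 - b*a - c/4 \<longleftrightarrow> quad_root b c \<le> a"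
    by auto
qed

text \<open>\<open>lam_of\<close> inverts \<open>aa\<close> (\<open>\<lambda> = a\<^sup>2/(1+a\<^sup>2)\<close> for \<open>a = \<surd>(\<lambda>/(1-\<lambda>))\<close>); clipping at \<open>0\<close>
  makes it monotone on all of \<open>\<real>\<close>.\<close>

definition lam_of :: "real \<Rightarrow> real" where
  "lam_of r = (max 0 r)\<^sup>2 / (1 + (max 0 r)\<^sup>2)"

lemma lam_of_aa: "0 < l \<Longrightarrow> l < 1 \<Longrightarrow> lam_of (aa l) = l"
proof -
  assume l: "0 < l" "l < 1"
  have nn: "0 \<le> l/(1-l)" using l by simp
  have "(aa l)\<^sup>2 = l/(1-l)" "0 \<le> aa l" unfolding aa_def using nn by simp_all
  moreover have "1 + (aa l)\<^sup>2 > 0" by (simp add: add_pos_nonneg)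
  ultimately show ?thesis using l unfolding lam_of_def by (simp add: field_simps)
qed

lemma aa_lam_of: "0 < r \<Longrightarrow> aa (lam_of r) = r"
proof -
  assume r: "0 < r"
  have p: "1 + r\<^sup>2 > 0" by (simp add: add_pos_nonneg)
  have m: "lam_of r = r\<^sup>2/(1+r\<^sup>2)" using r unfolding lam_of_def by simp
  have "1 - lam_of r = 1/(1+r\<^sup>2)" using p unfolding m by (simp add: field_simps)
  then have "lam_of r / (1 - lam_of r) = r\<^sup>2" unfolding m using p by (simp add: field_simps)
  then show ?thesis using r unfolding aa_def by simp
qed

lemma lam_of_strict_mono: "0 \<le> a \<Longrightarrow> a < r \<Longrightarrow> lam_of a < lam_of r"
proof -
  assume a: "0 \<le> a" "a < r"
  have "a\<^sup>2 < r\<^sup>2" using a by (simp add: power_strict_mono)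
  then show ?thesis using a unfolding lam_of_def by (simp add: field_simps add_pos_nonneg)
qed

lemma lam_of_mono: "a \<le> r \<Longrightarrow> lam_of a \<le> lam_of r"
proof -
  assume "a \<le> r"
  then have "(max 0 a)\<^sup>2 \<le> (max 0 r)\<^sup>2" by (simp add: power_mono)
  then show ?thesis unfolding lam_of_def by (simp add: field_simps add_pos_nonneg)
qed

lemma lam_of_less_iff:
  assumes "0 < a"
  shows "lam_of a < lam_of r \<longleftrightarrow> a < r" and "lam_of r < lam_of a \<longleftrightarrow> r < a"
proof -
  have "lam_of r < lam_of a" if "r < a"
  proof -
    have "lam_of r = lam_of (max 0 r)" by (simp add: lam_of_def)
    then show ?thesis using lam_of_strict_mono[of "max 0 r" a] that assms by simp
  qed
  then show "lam_of a < lam_of r \<longleftrightarrow> a < r" "lam_of r < lam_of a \<longleftrightarrow> r < a"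
    using lam_of_strict_mono[of a r] lam_of_mono[of a r] lam_of_mono[of r a] assms by force+
qed

lemma lam_of_le_iff:
  assumes "0 < a"
  shows "lam_of a \<le> lam_of r \<longleftrightarrow> a \<le> r" and "lam_of r \<le> lam_of a \<longleftrightarrow> r \<le> a"
  using lam_of_less_iff[OF assms] by (simp_all add: not_less[symmetric])

lemma one_less_if_half_less_lam_of: "1/2 < lam_of r \<Longrightarrow> 1 < r"
  using lam_of_mono[of r 1] by (force simp: lam_of_def)

lemma aa_eq_if_lam_of_eq: "lam_of r = l \<Longrightarrow> 1/2 < l \<Longrightarrow> 1 < r \<and> aa l = r"
  using one_less_if_half_less_lam_of aa_lam_of by force

lemma lam_of_two: "lam_of 2 = 4/5"
  by (simp add: lam_of_def)

text \<open>For a point \<open>q\<close> of \<open>D\<close>, \<open>a_BD q\<close> is the value of the parameter \<open>a\<close> for which \<open>q\<close> lies on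
  the line carrying the side \<open>BD\<close>, i.e. the relevant root of the quadratic obtained by
  multiplying the equation of that line by \<open>a\<close>; likewise for the other three sides.\<close>

definition a_BD :: "real \<times> real \<Rightarrow> real" where "a_BD q = quad_root (snd q + 3) (-4 * (fst q + 1))"
definition a_CA :: "real \<times> real \<Rightarrow> real" where "a_CA q = quad_root (1 - snd q) (4 * (fst q + 1))"
definition a_AB :: "real \<times> real \<Rightarrow> real" where "a_AB q = quad_root (1 - snd q) (-4 * (fst q + 1))"
definition a_DC :: "real \<times> real \<Rightarrow> real" where "a_DC q = quad_root (1 + snd q) (4 * (fst q + 1))"

definition lam_BD :: "real \<times> real \<Rightarrow> real" where "lam_BD q = lam_of (a_BD q)"
definition lam_CA :: "real \<times> real \<Rightarrow> real" where "lam_CA q = lam_of (a_CA q)"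
definition lam_AB :: "real \<times> real \<Rightarrow> real" where "lam_AB q = lam_of (a_AB q)"
definition lam_DC :: "real \<times> real \<Rightarrow> real" where "lam_DC q = lam_of (a_DC q)"

definition lam_hi :: "real \<times> real \<Rightarrow> real" where "lam_hi q = min (lam_BD q) (lam_CA q)"
definition lam_lo :: "real \<times> real \<Rightarrow> real" where "lam_lo q = max (lam_AB q) (lam_DC q)"

lemma less_le_iff_of_scaled_diff:
  fixes a P Q E :: real
  assumes "0 < a" "a*Q - a*P = - E"
  shows "P < Q \<longleftrightarrow> E < 0" and "P \<le> Q \<longleftrightarrow> E \<le> 0"
  using mult_less_cancel_left_pos[OF assms(1), of P Q] mult_le_cancel_left_pos[OF assms(1), of P Q] assms(2)
  by linarith+

lemma BD_bound_iff:
  assumes "(x,z) \<in> Dom" "1 \<le> a"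
  shows "a - 3 + 1/a < z - x/a \<longleftrightarrow> a < a_BD (x,z)"
    and "a - 3 + 1/a \<le> z - x/a \<longleftrightarrow> a \<le> a_BD (x,z)"
proof -
  have neg: "1 - (z+3) - (-4*(x+1))/4 < 0" using assms(1) by (simp add: Dom_def)
  have "a*(z - x/a) - a*(a - 3 + 1/a) = - (a\<^sup>2 - (z+3)*a - (-4*(x+1))/4)"
    using assms(2) by (simp add: field_simps power2_eq_square)
  from less_le_iff_of_scaled_diff[OF _ this] assms(2) quad_sign_if_neg_at_one[OF neg assms(2)]
  show "a - 3 + 1/a < z - x/a \<longleftrightarrow> a < a_BD (x,z)" "a - 3 + 1/a \<le> z - x/a \<longleftrightarrow> a \<le> a_BD (x,z)"
    unfolding a_BD_def by auto
qed

lemma CA_bound_iff: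
  assumes "(x,z) \<in> Dom" "1 \<le> a"
  shows "z - x/a < 1 - a + 1/a \<longleftrightarrow> a < a_CA (x,z)"
    and "z - x/a \<le> 1 - a + 1/a \<longleftrightarrow> a \<le> a_CA (x,z)"
proof -
  have neg: "1 - (1-z) - (4*(x+1))/4 < 0" using assms(1) by (simp add: Dom_def)
  have "a*(1 - a + 1/a) - a*(z - x/a) = - (a\<^sup>2 - (1-z)*a - (4*(x+1))/4)"
    using assms(2) by (simp add: field_simps power2_eq_square)
  from less_le_iff_of_scaled_diff[OF _ this] assms(2) quad_sign_if_neg_at_one[OF neg assms(2)]
  show "z - x/a < 1 - a + 1/a \<longleftrightarrow> a < a_CA (x,z)" "z - x/a \<le> 1 - a + 1/a \<longleftrightarrow> a \<le> a_CA (x,z)"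
    unfolding a_CA_def by auto
qed

lemma AB_bound_iff:
  assumes "(x,z) \<in> Dom" "1 \<le> a"
  shows "1 - a - 1/a < z + x/a \<longleftrightarrow> a_AB (x,z) < a"
    and "1 - a - 1/a \<le> z + x/a \<longleftrightarrow> a_AB (x,z) \<le> a"
proof -
  have vertex: "1 - z < 2" using assms(1) by (simp add: Dom_def)
  have "a*(z + x/a) - a*(1 - a - 1/a) = - (-(a\<^sup>2 - (1-z)*a - (-4*(x+1))/4))"
    using assms(2) by (simp add: field_simps power2_eq_square)
  from less_le_iff_of_scaled_diff[OF _ this] assms(2) quad_sign_if_vertex_lt_one[OF vertex assms(2)]
  show "1 - a - 1/a < z + x/a \<longleftrightarrow> a_AB (x,z) < a" "1 - a - 1/a \<le> z + x/a \<longleftrightarrow> a_AB (x,z) \<le> a"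
    unfolding a_AB_def by auto
qed

lemma DC_bound_iff:
  assumes "(x,z) \<in> Dom" "1 \<le> a"
  shows "z + x/a < a - 1 - 1/a \<longleftrightarrow> a_DC (x,z) < a"
    and "z + x/a \<le> a - 1 - 1/a \<longleftrightarrow> a_DC (x,z) \<le> a"
proof -
  have vertex: "1 + z < 2" using assms(1) by (simp add: Dom_def)
  have "a*(a - 1 - 1/a) - a*(z + x/a) = - (-(a\<^sup>2 - (1+z)*a - (4*(x+1))/4))"
    using assms(2) by (simp add: field_simps power2_eq_square)
  from less_le_iff_of_scaled_diff[OF _ this] assms(2) quad_sign_if_vertex_lt_one[OF vertex assms(2)]
  show "z + x/a < a - 1 - 1/a \<longleftrightarrow> a_DC (x,z) < a" "z + x/a \<le> a - 1 - 1/a \<longleftrightarrow> a_DC (x,z) \<le> a"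
    unfolding a_DC_def by auto
qed

lemma on_BD_line: "(x,z) \<in> Dom \<Longrightarrow> 1 \<le> a_BD (x,z) \<Longrightarrow> z - x / a_BD (x,z) = a_BD (x,z) - 3 + 1 / a_BD (x,z)"
  using BD_bound_iff[of x z "a_BD (x,z)"] by linarith
lemma on_CA_line: "(x,z) \<in> Dom \<Longrightarrow> 1 \<le> a_CA (x,z) \<Longrightarrow> z - x / a_CA (x,z) = 1 - a_CA (x,z) + 1 / a_CA (x,z)"
  using CA_bound_iff[of x z "a_CA (x,z)"] by linarith
lemma on_AB_line: "(x,z) \<in> Dom \<Longrightarrow> 1 \<le> a_AB (x,z) \<Longrightarrow> z + x / a_AB (x,z) = 1 - a_AB (x,z) - 1 / a_AB (x,z)"
  using AB_bound_iff[of x z "a_AB (x,z)"] by linarith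
lemma on_DC_line: "(x,z) \<in> Dom \<Longrightarrow> 1 \<le> a_DC (x,z) \<Longrightarrow> z + x / a_DC (x,z) = a_DC (x,z) - 1 - 1 / a_DC (x,z)"
  using DC_bound_iff[of x z "a_DC (x,z)"] by linarith

lemma on_side_lines_if_lam_eq:
  assumes q: "(x,z) \<in> Dom" and l: "1/2 < l"
  shows "lam_BD (x,z) = l \<Longrightarrow> z - x / aa l = aa l - 3 + 1 / aa l"
    and "lam_CA (x,z) = l \<Longrightarrow> z - x / aa l = 1 - aa l + 1 / aa l"
    and "lam_AB (x,z) = l \<Longrightarrow> z + x / aa l = 1 - aa l - 1 / aa l"
    and "lam_DC (x,z) = l \<Longrightarrow> z + x / aa l = aa l - 1 - 1 / aa l"
  using aa_eq_if_lam_of_eq[OF _ l] on_BD_line[OF q] on_CA_line[OF q] on_AB_line[OF q] on_DC_line[OF q]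
  unfolding lam_BD_def lam_CA_def lam_AB_def lam_DC_def by force+

definition Pset_closed :: "real \<Rightarrow> (real \<times> real) set" where
  "Pset_closed l = {(x, z). aa l - 3 + 1 / aa l \<le> z - x / aa l \<and> z - x / aa l \<le> 1 - aa l + 1 / aa l
                   \<and> 1 - aa l - 1 / aa l \<le> z + x / aa l \<and> z + x / aa l \<le> aa l - 1 - 1 / aa l}"

lemma Pset_iff_lam:
  assumes q: "q \<in> Dom" and l: "1/2 < l" "l < 1"
  shows "q \<in> Pset l \<longleftrightarrow> lam_lo q < l \<and> l < lam_hi q"
    and "q \<in> Pset_closed l \<longleftrightarrow> lam_lo q \<le> l \<and> l \<le> lam_hi q"
proof -
  obtain x z where xz: "q = (x,z)" by fastforce
  define a where "a = aa l"
  have a: "1 \<le> a" "0 < a" using l by (simp_all add: a_def aa_def field_simps)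
  have l_eq: "l = lam_of a" using lam_of_aa[of l] l a_def by simp
  note bounds = BD_bound_iff[OF q[unfolded xz] a(1)] CA_bound_iff[OF q[unfolded xz] a(1)]
    AB_bound_iff[OF q[unfolded xz] a(1)] DC_bound_iff[OF q[unfolded xz] a(1)]
  note lams = lam_lo_def lam_hi_def lam_BD_def lam_CA_def lam_AB_def lam_DC_def l_eq
  show "q \<in> Pset l \<longleftrightarrow> lam_lo q < l \<and> l < lam_hi q"
    unfolding Pset_def xz mem_Collect_eq case_prod_conv a_def[symmetric]
    unfolding bounds lams using lam_of_less_iff[OF a(2)] by auto
  show "q \<in> Pset_closed l \<longleftrightarrow> lam_lo q \<le> l \<and> l \<le> lam_hi q"
    unfolding Pset_closed_def xz mem_Collect_eq case_prod_conv a_def[symmetric]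
    unfolding bounds lams using lam_of_le_iff[OF a(2)] by auto
qed

section \<open>The swept sides\<close>

lemma convex_comb_in_open_interval:
  fixes lo hi w w' s :: real
  assumes "lo \<le> w" "w \<le> hi" "lo < w'" "w' < hi" "0 < s" "s \<le> 1"
  shows "lo < w + s*(w' - w)" "w + s*(w' - w) < hi"
proof -
  have e: "w + s*(w' - w) = (1-s)*w + s*w'" by (simp add: algebra_simps)
  have "(1-s)*lo \<le> (1-s)*w" "(1-s)*w \<le> (1-s)*hi" using assms by (simp_all add: mult_left_mono)
  moreover have "s*lo < s*w'" "s*w' < s*hi" using assms by simp_all
  ultimately show "lo < w + s*(w' - w)" "w + s*(w' - w) < hi" unfolding e by (simp_all add: algebra_simps)
qed

text \<open>For \<open>1 < a < 2\<close> the point \<open>((a-2)/2, -1/2)\<close> lies in \<open>P(\<lambda>)\<close>; approach from it.\<close>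

lemma Pset_closed_subset_closure:
  assumes l: "1/2 < l" "l < 4/5"
  shows "Pset_closed l \<subseteq> closure (Pset l)"
proof
  fix q assume q: "q \<in> Pset_closed l"
  obtain x z where xz: "q = (x,z)" by fastforce
  define a where "a = aa l"
  have a1: "1 < a" using l by (simp add: a_def aa_def field_simps)
  have "l/(1-l) < 4" using l by (simp add: field_simps)
  then have a2: "a < 2" unfolding a_def aa_def by (metis real_sqrt_four real_sqrt_less_iff)
  define c where "c = ((a-2)/2, -1/2::real)"
  define s where "s n = inverse (real (Suc n))" for n
  define y where "y n = q + s n *\<^sub>R (c - q)" for n
  have s: "0 < s n" "s n \<le> 1" for n unfolding s_def by (auto simp: field_simps)
  have u: "snd (y n) - fst (y n)/a = (z - x/a) + s n * ((1/a - 1) - (z - x/a))"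
    and v: "snd (y n) + fst (y n)/a = (z + x/a) + s n * ((-1/a) - (z + x/a))" for n
    using a1 unfolding y_def c_def xz by (auto simp: field_simps)
  have q': "a - 3 + 1 / a \<le> z - x / a" "z - x / a \<le> 1 - a + 1 / a"
    "1 - a - 1 / a \<le> z + x / a" "z + x / a \<le> a - 1 - 1 / a"
    using q unfolding Pset_closed_def xz a_def by auto
  have "y n \<in> Pset l" for n
  proof -
    have c1: "a - 3 + 1/a < 1/a - 1" "1/a - 1 < 1 - a + 1/a"
      and c2: "1 - a - 1/a < -1/a" "-1/a < a - 1 - 1/a" using a1 a2 by simp_all
    note convex_comb_in_open_interval[OF q'(1,2) c1 s[of n]] convex_comb_in_open_interval[OF q'(3,4) c2 s[of n]]
    then show ?thesis unfolding Pset_def a_def[symmetric] using u[of n] v[of n] by (cases "y n") auto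
  qed
  moreover have "y \<longlonglongrightarrow> q"
  proof -
    have "s \<longlonglongrightarrow> 0" unfolding s_def by (rule LIMSEQ_inverse_real_of_nat)
    then have "y \<longlonglongrightarrow> q + 0 *\<^sub>R (c - q)" unfolding y_def by (intro tendsto_intros)
    then show ?thesis by simp
  qed
  ultimately show "q \<in> closure (Pset l)" unfolding closure_sequential by blast
qed

lemma mem_closure_Pset:
  assumes "q \<in> Dom" "1/2 < l" "l < 4/5" "lam_lo q \<le> l" "l \<le> lam_hi q"
  shows "q \<in> closure (Pset l)"
  using Pset_iff_lam(2)[of q l] Pset_closed_subset_closure[of l] assms by auto

definition sweep :: "(real \<Rightarrow> (real \<times> real) set) \<Rightarrow> real \<Rightarrow> real \<Rightarrow> (real \<times> real) set" where
  "sweep side ls lss = (\<Union>m\<in>{ls..lss}. side m)"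

lemma Omega0_eq:
  "Omega0 ls lss = interior (Dom -
     (interior (sweep side_CA ls lss \<inter> sweep side_DC ls lss) \<union> interior (sweep side_CA ls lss \<inter> sweep side_AB ls lss)
    \<union> interior (sweep side_AB ls lss \<inter> sweep side_BD ls lss) \<union> interior (sweep side_BD ls lss \<inter> sweep side_DC ls lss)))"
  by (simp add: Omega0_def sweep_def Let_def)

lemma mem_sweep_if_lam_eq:
  assumes range: "1/2 < ls" "lss < 4/5" and q: "q \<in> Dom"
    and l: "ls \<le> l" "l \<le> lss" "lam_lo q \<le> l" "l \<le> lam_hi q"
  shows "lam_BD q = l \<Longrightarrow> q \<in> sweep side_BD ls lss" and "lam_CA q = l \<Longrightarrow> q \<in> sweep side_CA ls lss"
    and "lam_AB q = l \<Longrightarrow> q \<in> sweep side_AB ls lss" and "lam_DC q = l \<Longrightarrow> q \<in> sweep side_DC ls lss"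
proof -
  obtain x z where xz: "q = (x,z)" by fastforce
  have cl: "q \<in> closure (Pset l)" by (rule mem_closure_Pset[OF q]) (use range l in linarith)+
  have l': "l \<in> {ls..lss}" "1/2 < l" using range l by auto
  note lines = on_side_lines_if_lam_eq[OF q[unfolded xz] l'(2)]
  show "lam_BD q = l \<Longrightarrow> q \<in> sweep side_BD ls lss"
  proof -
    assume "lam_BD q = l"
    then have "z = x / aa l + 1 / aa l + aa l - 3" using lines(1) xz by fastforce
    then show ?thesis using cl l'(1) unfolding sweep_def side_BD_def xz by auto
  qed
  show "lam_CA q = l \<Longrightarrow> q \<in> sweep side_CA ls lss"
  proof -
    assume "lam_CA q = l"
    then have "z = 1 + x / aa l + 1 / aa l - aa l" using lines(2) xz by fastforce
    then show ?thesis using cl l'(1) unfolding sweep_def side_CA_def xz by auto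
  qed
  show "lam_AB q = l \<Longrightarrow> q \<in> sweep side_AB ls lss"
  proof -
    assume "lam_AB q = l"
    then have "z = 1 - x / aa l - 1 / aa l - aa l" using lines(3) xz by fastforce
    then show ?thesis using cl l'(1) unfolding sweep_def side_AB_def xz by auto
  qed
  show "lam_DC q = l \<Longrightarrow> q \<in> sweep side_DC ls lss"
  proof -
    assume "lam_DC q = l"
    then have "z = - x / aa l - 1 / aa l + aa l - 1" using lines(4) xz by fastforce
    then show ?thesis using cl l'(1) unfolding sweep_def side_DC_def xz by auto
  qed
qed

section \<open>Incidences of the side lines\<close>

lemma vertices_of_Pset:
  fixes a x z :: real
  assumes "a \<noteq> 0"
  shows "z - x/a = a - 3 + 1/a \<Longrightarrow> z + x/a = 1 - a - 1/a \<Longrightarrow> z = -1"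
    and "z - x/a = a - 3 + 1/a \<Longrightarrow> z + x/a = a - 1 - 1/a \<Longrightarrow> x = z + 1"
    and "z - x/a = 1 - a + 1/a \<Longrightarrow> z + x/a = 1 - a - 1/a \<Longrightarrow> x = -1"
    and "z - x/a = 1 - a + 1/a \<Longrightarrow> z + x/a = a - 1 - 1/a \<Longrightarrow> z = 0"
proof -
  show "z - x/a = a - 3 + 1/a \<Longrightarrow> z + x/a = 1 - a - 1/a \<Longrightarrow> z = -1" by linarith
  show "z - x/a = 1 - a + 1/a \<Longrightarrow> z + x/a = a - 1 - 1/a \<Longrightarrow> z = 0" by linarith
  show "z - x/a = a - 3 + 1/a \<Longrightarrow> z + x/a = a - 1 - 1/a \<Longrightarrow> x = z + 1"
  proof -
    assume "z - x/a = a - 3 + 1/a" "z + x/a = a - 1 - 1/a"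
    then have "x/a = 1 - 1/a" "z = a - 2" by linarith+
    then show ?thesis using assms by (simp add: field_simps)
  qed
  show "z - x/a = 1 - a + 1/a \<Longrightarrow> z + x/a = 1 - a - 1/a \<Longrightarrow> x = -1"
  proof -
    assume "z - x/a = 1 - a + 1/a" "z + x/a = 1 - a - 1/a"
    then have "x/a = - 1/a" by linarith
    then show ?thesis using assms by (simp add: field_simps)
  qed
qed

lemma lam_BD_eq_lam_CA:
  assumes q: "q \<in> Dom" and half: "1/2 < lam_BD q" and eq: "lam_BD q = lam_CA q"
  shows "lam_BD q = 4/5"
proof -
  obtain x z where xz: "q = (x,z)" by fastforce
  define a where "a = aa (lam_BD q)"
  have "z - x / a = a - 3 + 1 / a" "z - x / a = 1 - a + 1 / a"
    using on_side_lines_if_lam_eq(1,2)[OF q[unfolded xz] half] eq unfolding a_def xz by auto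
  then have "a = 2" by simp
  moreover have "a = a_BD q" using aa_eq_if_lam_of_eq[OF _ half] unfolding a_def lam_BD_def by simp
  ultimately show ?thesis by (simp add: lam_BD_def lam_of_two)
qed

lemma lam_AB_ne_lam_DC:
  assumes q: "q \<in> Dom" and half: "1/2 < lam_AB q"
  shows "lam_AB q \<noteq> lam_DC q"
proof
  assume eq: "lam_AB q = lam_DC q"
  obtain x z where xz: "q = (x,z)" by fastforce
  define a where "a = aa (lam_AB q)"
  have "z + x / a = 1 - a - 1 / a" "z + x / a = a - 1 - 1 / a"
    using on_side_lines_if_lam_eq(3,4)[OF q[unfolded xz] half] eq unfolding a_def xz by auto
  then have "a = 1" by simp
  moreover have "1 < a" using aa_eq_if_lam_of_eq[OF _ half] unfolding a_def lam_AB_def by simp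
  ultimately show False by simp
qed

lemma lam_lo_ne_lam_hi:
  assumes q: "q \<in> Dom" and half: "1/2 < lam_hi q"
  shows "lam_lo q \<noteq> lam_hi q"
proof
  assume eq: "lam_lo q = lam_hi q"
  obtain x z where xz: "q = (x,z)" by fastforce
  define a where "a = aa (lam_hi q)"
  have "lam_hi q = lam_BD q \<or> lam_hi q = lam_CA q" "lam_lo q = lam_AB q \<or> lam_lo q = lam_DC q"
    by (auto simp: lam_hi_def lam_lo_def min_def max_def)
  moreover from this(1) have a: "a \<noteq> 0"
    using aa_eq_if_lam_of_eq[OF _ half] unfolding a_def lam_BD_def lam_CA_def by force
  ultimately have "z - x / a = a - 3 + 1 / a \<or> z - x / a = 1 - a + 1 / a"
    and "z + x / a = 1 - a - 1 / a \<or> z + x / a = a - 1 - 1 / a"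
    using on_side_lines_if_lam_eq[OF q[unfolded xz] half] eq unfolding a_def xz by auto
  then show False using vertices_of_Pset[OF a] q by (auto simp: xz Dom_def)
qed

definition line_set :: "real \<Rightarrow> real \<Rightarrow> (real \<times> real) set" where
  "line_set \<alpha> \<beta> = {(x, z). z + \<alpha> * x = \<beta>}"

lemma negligible_line_set: "negligible (line_set \<alpha> \<beta>)"
proof -
  have "line_set \<alpha> \<beta> = {q. (\<alpha>, 1) \<bullet> q = \<beta>}" unfolding line_set_def by (auto simp: algebra_simps)
  then show ?thesis using negligible_hyperplane[of "(\<alpha>, 1::real)" \<beta>] by (simp add: zero_prod_def)
qed

definition side_lines :: "real \<Rightarrow> (real \<times> real) set" where
  "side_lines l = line_set (-1 / aa l) (aa l - 3 + 1 / aa l) \<union> line_set (-1 / aa l) (1 - aa l + 1 / aa l)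
        \<union> line_set (1 / aa l) (1 - aa l - 1 / aa l) \<union> line_set (1 / aa l) (aa l - 1 - 1 / aa l)"

lemma negligible_side_lines: "negligible (side_lines l)"
  unfolding side_lines_def by (intro negligible_Un negligible_line_set)

lemma mem_side_lines:
  assumes q: "q \<in> Dom" and l: "1/2 < l"
    and eq: "lam_BD q = l \<or> lam_CA q = l \<or> lam_AB q = l \<or> lam_DC q = l"
  shows "q \<in> side_lines l"
proof -
  obtain x z where xz: "q = (x,z)" by fastforce
  from on_side_lines_if_lam_eq[OF q[unfolded xz] l] eq show ?thesis
    unfolding side_lines_def line_set_def xz by (auto simp: algebra_simps)
qed

section \<open>The stream function\<close>

definition psi_integrand :: "(real \<Rightarrow> real) \<Rightarrow> real \<Rightarrow> real \<Rightarrow> real" where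
  "psi_integrand \<sigma> t l = cos (sqrt l * t) * \<sigma> l"

definition psi_primitive :: "real \<Rightarrow> (real \<Rightarrow> real) \<Rightarrow> real \<Rightarrow> real \<Rightarrow> real" where
  "psi_primitive ls \<sigma> t m = integral {ls..m} (psi_integrand \<sigma> t)"

definition clamp_to :: "real \<Rightarrow> real \<Rightarrow> real \<Rightarrow> real" where
  "clamp_to lo hi m = max lo (min hi m)"

lemma continuous_on_psi_integrand: "continuous_on S \<sigma> \<Longrightarrow> continuous_on S (psi_integrand \<sigma> t)"
  unfolding psi_integrand_def by (intro continuous_intros) auto

lemma integral_Ioo_Int_Icc:
  fixes f :: "real \<Rightarrow> real"
  assumes "lo \<le> hi" and f: "continuous_on {lo..hi} f"
  shows "integral ({a<..<b} \<inter> {lo..hi}) f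
       = integral {lo..clamp_to lo hi b} f - integral {lo..clamp_to lo hi (min a b)} f"
proof -
  define c where "c = clamp_to lo hi (min a b)"
  define d where "d = clamp_to lo hi b"
  have cd: "lo \<le> c" "c \<le> d" "d \<le> hi" using assms(1) unfolding c_def d_def clamp_to_def by auto
  have ends: "({a<..<b} \<inter> {lo..hi}) - {c..d} \<subseteq> {c,d}" "{c..d} - ({a<..<b} \<inter> {lo..hi}) \<subseteq> {c,d}"
    using assms(1) unfolding c_def d_def clamp_to_def by (auto simp: min_def max_def split: if_splits)
  have "integral ({a<..<b} \<inter> {lo..hi}) f = integral {c..d} f"
    by (rule integral_spike_set; rule negligible_subset[of "{c,d}"]) (use ends in auto)
  moreover have "integral {lo..c} f + integral {c..d} f = integral {lo..d} f"
    by (rule Henstock_Kurzweil_Integration.integral_combine[OF cd(1,2)])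
       (rule integrable_continuous_interval, rule continuous_on_subset[OF f], use cd in auto)
  ultimately show ?thesis unfolding c_def d_def by simp
qed

lemma psi_eq_psi_primitive:
  assumes q: "q \<in> Dom" and range: "1/2 < ls" "ls \<le> lss" "lss < 1"
    and \<sigma>: "continuous_on {ls..lss} \<sigma>"
  shows "psi ls lss \<sigma> (fst q) (snd q) t = psi_primitive ls \<sigma> t (clamp_to ls lss (lam_hi q))
           - psi_primitive ls \<sigma> t (clamp_to ls lss (min (lam_lo q) (lam_hi q)))"
proof -
  have "psi ls lss \<sigma> (fst q) (snd q) t
      = integral {ls..lss} (\<lambda>l. if l \<in> {lam_lo q<..<lam_hi q} then psi_integrand \<sigma> t l else 0)"
    unfolding psi_def
  proof (rule integral_cong)
    fix l assume "l \<in> {ls..lss}"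
    then have "1/2 < l" "l < 1" using range by auto
    then show "cos (sqrt l * t) * \<sigma> l * chi (fst q) (snd q) l
             = (if l \<in> {lam_lo q<..<lam_hi q} then psi_integrand \<sigma> t l else 0)"
      unfolding chi_def psi_integrand_def using Pset_iff_lam(1)[OF q] q by (auto simp: indicator_def)
  qed
  also have "\<dots> = integral ({lam_lo q<..<lam_hi q} \<inter> {ls..lss}) (psi_integrand \<sigma> t)"
    by (rule integral_restrict_Int)
  also have "\<dots> = psi_primitive ls \<sigma> t (clamp_to ls lss (lam_hi q))
           - psi_primitive ls \<sigma> t (clamp_to ls lss (min (lam_lo q) (lam_hi q)))"
    unfolding psi_primitive_def
    by (rule integral_Ioo_Int_Icc[OF range(2) continuous_on_psi_integrand[OF \<sigma>]])
  finally show ?thesis .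
qed

lemma has_real_derivative_psi_primitive:
  assumes \<sigma>: "continuous_on {ls..lss} \<sigma>" and m: "ls < m" "m < lss"
  shows "(psi_primitive ls \<sigma> t has_real_derivative psi_integrand \<sigma> t m) (at m)"
proof -
  have "(psi_primitive ls \<sigma> t has_real_derivative psi_integrand \<sigma> t m) (at m within {ls..lss})"
    unfolding psi_primitive_def
    by (rule integral_has_real_derivative[OF continuous_on_psi_integrand[OF \<sigma>]]) (use m in auto)
  then show ?thesis using at_within_Icc_at[OF m] by simp
qed

lemma has_real_derivative_lam_of:
  assumes "0 < r" shows "(lam_of has_real_derivative 2*r / (1 + r\<^sup>2)\<^sup>2) (at r)"
proof -
  have "1 + r\<^sup>2 \<noteq> 0" by (smt (verit) zero_le_power2)
  then have "((\<lambda>r. r\<^sup>2 / (1 + r\<^sup>2)) has_real_derivative 2*r / (1 + r\<^sup>2)\<^sup>2) (at r)"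
    by (auto intro!: derivative_eq_intros simp: field_simps power2_eq_square)
  then show ?thesis
    by (rule has_field_derivative_transform_within_open[where S="{0<..}"])
       (use assms in \<open>auto simp: lam_of_def\<close>)
qed

lemma has_real_derivative_quad_root:
  assumes "(b has_real_derivative b') (at y)" "(c has_real_derivative c') (at y)" "0 < (b y)\<^sup>2 + c y"
  shows "((\<lambda>y. quad_root (b y) (c y)) has_real_derivative
           (b' + (2 * b y * b' + c') / (2 * sqrt ((b y)\<^sup>2 + c y))) / 2) (at y)"
proof -
  have "0 < sqrt ((b y)\<^sup>2 + c y)" using assms(3) by simp
  then show ?thesis unfolding quad_root_def using assms
    by (auto intro!: derivative_eq_intros simp: power2_eq_square field_simps inverse_eq_divide)
qed

text \<open>The relation \<open>M (\<partial>\<^sub>x M)\<^sup>2 = (1 - M) (\<partial>\<^sub>z M)\<^sup>2\<close> says that the level lines of \<open>M\<close> have slopes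
  \<open>\<plusminus>1/aa M\<close>, those of the sides of \<open>P(M)\<close>; it is what makes the energy of a single active mode
  \<open>\<lambda> = M(x,z)\<close> independent of time.\<close>

definition eikonal_at :: "(real \<times> real \<Rightarrow> real) \<Rightarrow> real \<times> real \<Rightarrow> bool" where
  "eikonal_at M q \<longleftrightarrow> (\<exists>Dz Dx. ((\<lambda>z. M (fst q, z)) has_real_derivative Dz) (at (snd q))
     \<and> ((\<lambda>x. M (x, snd q)) has_real_derivative Dx) (at (fst q))
     \<and> Dx\<^sup>2 * M q = Dz\<^sup>2 * (1 - M q))"

lemma quad_root_partial_derivs:
  fixes u \<beta> v \<gamma> x z :: real
  defines "b \<equiv> u + \<beta> * z" and "c \<equiv> v + \<gamma> * x"
  assumes disc: "0 < b\<^sup>2 + c"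
  shows "((\<lambda>z. quad_root (u + \<beta> * z) c) has_real_derivative \<beta> * quad_root b c / sqrt (b\<^sup>2 + c)) (at z)"
    and "((\<lambda>x. quad_root b (v + \<gamma> * x)) has_real_derivative \<gamma> / (4 * sqrt (b\<^sup>2 + c))) (at x)"
proof -
  define S where "S = sqrt (b\<^sup>2 + c)"
  have S: "0 < S" using disc unfolding S_def by simp
  have root: "quad_root b c = (b + S)/2" unfolding quad_root_def S_def ..
  have "((\<lambda>z. u + \<beta> * z) has_real_derivative \<beta>) (at z)" by (auto intro!: derivative_eq_intros)
  from has_real_derivative_quad_root[OF this DERIV_const] disc
  have "((\<lambda>z. quad_root (u + \<beta> * z) c) has_real_derivative (\<beta> + (2*b*\<beta> + 0)/(2*S))/2) (at z)"
    by (simp add: b_def S_def)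
  moreover have "(\<beta> + (2*b*\<beta> + 0)/(2*S))/2 = \<beta> * quad_root b c / S" using S root by (simp add: field_simps)
  ultimately show "((\<lambda>z. quad_root (u + \<beta> * z) c) has_real_derivative \<beta> * quad_root b c / sqrt (b\<^sup>2 + c)) (at z)"
    by (simp add: S_def)
  have "((\<lambda>x. v + \<gamma> * x) has_real_derivative \<gamma>) (at x)" by (auto intro!: derivative_eq_intros)
  from has_real_derivative_quad_root[OF DERIV_const this] disc
  have "((\<lambda>x. quad_root b (v + \<gamma> * x)) has_real_derivative (0 + (2*b*0 + \<gamma>)/(2*S))/2) (at x)"
    by (simp add: c_def S_def)
  moreover have "(0 + (2*b*0 + \<gamma>)/(2*S))/2 = \<gamma> / (4*S)" using S by (simp add: field_simps)
  ultimately show "((\<lambda>x. quad_root b (v + \<gamma> * x)) has_real_derivative \<gamma> / (4 * sqrt (b\<^sup>2 + c))) (at x)"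
    by (simp add: S_def)
qed

lemma eikonal_at_lam_of_quad_root:
  fixes u \<beta> v \<gamma> :: real
  assumes M: "\<And>q. M q = lam_of (quad_root (u + \<beta> * snd q) (v + \<gamma> * fst q))"
    and \<beta>: "\<beta>\<^sup>2 = 1" and \<gamma>: "\<gamma>\<^sup>2 = 16"
    and disc: "0 < (u + \<beta> * snd q)\<^sup>2 + (v + \<gamma> * fst q)"
    and pos: "0 < quad_root (u + \<beta> * snd q) (v + \<gamma> * fst q)"
  shows "eikonal_at M q"
proof -
  obtain x z where q: "q = (x,z)" by fastforce
  define S where "S = sqrt ((u + \<beta> * z)\<^sup>2 + (v + \<gamma> * x))"
  define r where "r = quad_root (u + \<beta> * z) (v + \<gamma> * x)"
  define D where "D = 2*r / (1 + r\<^sup>2)\<^sup>2"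
  note partials = quad_root_partial_derivs[OF disc[unfolded q fst_conv snd_conv], folded S_def r_def]
  have lam: "(lam_of has_real_derivative D) (at r)"
    unfolding D_def by (rule has_real_derivative_lam_of) (use pos in \<open>simp add: r_def q\<close>)
  have dz: "((\<lambda>z. M (x, z)) has_real_derivative D * (\<beta> * r / S)) (at z)"
    using DERIV_chain2[OF _ partials(1), of lam_of D] lam unfolding M r_def by simp
  have dx: "((\<lambda>x. M (x, z)) has_real_derivative D * (\<gamma> / (4 * S))) (at x)"
    using DERIV_chain2[OF _ partials(2), of lam_of D] lam unfolding M r_def by simp
  have Mq: "M q = r\<^sup>2 / (1 + r\<^sup>2)" using pos unfolding M q r_def lam_of_def by simp
  have "0 < S" using disc unfolding S_def q by simp
  moreover have "0 < 1 + r\<^sup>2" using zero_le_power2[of r] by linarith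
  ultimately have ne: "S \<noteq> 0" "1 + r\<^sup>2 \<noteq> 0" by simp_all
  have "(D * (\<gamma> / (4*S)))\<^sup>2 * M q = D\<^sup>2 * r\<^sup>2 / (S\<^sup>2 * (1 + r\<^sup>2))"
    unfolding Mq using ne \<gamma> by (simp add: power_mult_distrib power_divide field_simps)
  also have "\<dots> = (D * (\<beta> * r / S))\<^sup>2 * (1 - M q)"
    unfolding Mq using ne \<beta> by (simp add: power_mult_distrib power_divide field_simps)
  finally show ?thesis unfolding eikonal_at_def q using dz dx by auto
qed

lemma eikonal_at_lam_BD: "q \<in> Dom \<Longrightarrow> eikonal_at lam_BD q"
proof (rule eikonal_at_lam_of_quad_root[where u=3 and \<beta>=1 and v="-4" and \<gamma>="-4"])
  assume "q \<in> Dom"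
  then have neg: "1 - (3 + 1 * snd q) - (-4 + -4 * fst q)/4 < 0" by (auto simp: Dom_def)
  show "0 < (3 + 1 * snd q)\<^sup>2 + (-4 + -4 * fst q)" "0 < quad_root (3 + 1 * snd q) (-4 + -4 * fst q)"
    using quad_sign_if_neg_at_one(3,4)[OF neg, of 1] by auto
qed (auto simp: lam_BD_def a_BD_def algebra_simps)

lemma eikonal_at_lam_CA: "q \<in> Dom \<Longrightarrow> eikonal_at lam_CA q"
proof (rule eikonal_at_lam_of_quad_root[where u=1 and \<beta>="-1" and v=4 and \<gamma>=4])
  assume "q \<in> Dom"
  then have neg: "1 - (1 + -1 * snd q) - (4 + 4 * fst q)/4 < 0" by (auto simp: Dom_def)
  show "0 < (1 + -1 * snd q)\<^sup>2 + (4 + 4 * fst q)" "0 < quad_root (1 + -1 * snd q) (4 + 4 * fst q)"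
    using quad_sign_if_neg_at_one(3,4)[OF neg, of 1] by auto
qed (auto simp: lam_CA_def a_CA_def algebra_simps)

lemma eikonal_at_lam_AB: "q \<in> Dom \<Longrightarrow> 1/2 < lam_AB q \<Longrightarrow> eikonal_at lam_AB q"
proof (rule eikonal_at_lam_of_quad_root[where u=1 and \<beta>="-1" and v="-4" and \<gamma>="-4"])
  assume "q \<in> Dom" "1/2 < lam_AB q"
  then have vertex: "1 + -1 * snd q < 2" and root: "1 < quad_root (1 + -1 * snd q) (-4 + -4 * fst q)"
    using one_less_if_half_less_lam_of by (auto simp: Dom_def lam_AB_def a_AB_def algebra_simps)
  show "0 < (1 + -1 * snd q)\<^sup>2 + (-4 + -4 * fst q)"
    using quad_sign_if_vertex_lt_one(3)[OF vertex order_refl root] .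
  show "0 < quad_root (1 + -1 * snd q) (-4 + -4 * fst q)" using root by simp
qed (auto simp: lam_AB_def a_AB_def algebra_simps)

lemma eikonal_at_lam_DC: "q \<in> Dom \<Longrightarrow> 1/2 < lam_DC q \<Longrightarrow> eikonal_at lam_DC q"
proof (rule eikonal_at_lam_of_quad_root[where u=1 and \<beta>=1 and v=4 and \<gamma>=4])
  assume "q \<in> Dom" "1/2 < lam_DC q"
  then have vertex: "1 + 1 * snd q < 2" and root: "1 < quad_root (1 + 1 * snd q) (4 + 4 * fst q)"
    using one_less_if_half_less_lam_of by (auto simp: Dom_def lam_DC_def a_DC_def algebra_simps)
  show "0 < (1 + 1 * snd q)\<^sup>2 + (4 + 4 * fst q)"
    using quad_sign_if_vertex_lt_one(3)[OF vertex order_refl root] .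
  show "0 < quad_root (1 + 1 * snd q) (4 + 4 * fst q)" using root by simp
qed (auto simp: lam_DC_def a_DC_def algebra_simps)

section \<open>Energy at a point\<close>

definition energy :: "real \<Rightarrow> real \<Rightarrow> (real \<Rightarrow> real) \<Rightarrow> real \<Rightarrow> real \<Rightarrow> real \<Rightarrow> real" where
  "energy ls lss \<sigma> x z t = (uvel ls lss \<sigma> x z t)\<^sup>2 + (vvel ls lss \<sigma> x z t)\<^sup>2 + (wvel ls lss \<sigma> x z t)\<^sup>2"

lemma eventually_nhds_Pair_slices:
  assumes "\<forall>\<^sub>F q in nhds (x, z). P q"
  shows "\<forall>\<^sub>F z' in nhds z. P (x, z')" and "\<forall>\<^sub>F x' in nhds x. P (x', z)"
proof -
  have "filterlim (\<lambda>z'. (x, z')) (nhds (x, z)) (nhds z)" "filterlim (\<lambda>x'. (x', z)) (nhds (x, z)) (nhds x)"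
    by (intro tendsto_Pair tendsto_const filterlim_ident)+
  then show "\<forall>\<^sub>F z' in nhds z. P (x, z')" "\<forall>\<^sub>F x' in nhds x. P (x', z)"
    using eventually_compose_filterlim[OF assms] by blast+
qed

lemma partial_derivs_psi:
  assumes ev: "\<forall>\<^sub>F q in nhds (x, z). psi ls lss \<sigma> (fst q) (snd q) t = G q"
    and Dz: "((\<lambda>z'. G (x, z')) has_real_derivative Dz) (at z)"
    and Dx: "((\<lambda>x'. G (x', z)) has_real_derivative Dx) (at x)"
  shows "deriv (\<lambda>z'. psi ls lss \<sigma> x z' t) z = Dz" and "deriv (\<lambda>x'. psi ls lss \<sigma> x' z t) x = Dx"
proof -
  note slices = eventually_nhds_Pair_slices[OF ev]
  have "((\<lambda>z'. psi ls lss \<sigma> x z' t) has_real_derivative Dz) (at z)"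
    by (rule DERIV_cong_ev[THEN iffD1, OF refl _ refl Dz]) (use slices(1) in \<open>auto elim: eventually_mono\<close>)
  moreover have "((\<lambda>x'. psi ls lss \<sigma> x' z t) has_real_derivative Dx) (at x)"
    by (rule DERIV_cong_ev[THEN iffD1, OF refl _ refl Dx]) (use slices(2) in \<open>auto elim: eventually_mono\<close>)
  ultimately show "deriv (\<lambda>z'. psi ls lss \<sigma> x z' t) z = Dz" "deriv (\<lambda>x'. psi ls lss \<sigma> x' z t) x = Dx"
    by (simp_all add: DERIV_imp_deriv)
qed

lemma energy_eq_0_if_psi_locally_time_only:
  assumes "\<forall>\<^sub>F q in nhds (x, z). \<forall>t. psi ls lss \<sigma> (fst q) (snd q) t = C t"
  shows "energy ls lss \<sigma> x z t = 0"
proof -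
  have "\<forall>\<^sub>F q in nhds (x, z). psi ls lss \<sigma> (fst q) (snd q) s = C s" for s
    using assms by (auto elim: eventually_mono)
  from partial_derivs_psi[OF this DERIV_const DERIV_const]
  have "deriv (\<lambda>z'. psi ls lss \<sigma> x z' s) z = 0" "deriv (\<lambda>x'. psi ls lss \<sigma> x' z s) x = 0" for s
    by simp_all
  then show ?thesis unfolding energy_def uvel_def vvel_def wvel_def by simp
qed

lemma interval_integral_cos:
  assumes "0 < \<omega>"
  shows "(LBINT s=0..t. c * cos (\<omega> * s)) = c * sin (\<omega> * t) / \<omega>"
proof -
  have "(LBINT s=0..t. c * cos (\<omega> * s)) = c * sin (\<omega> * t) / \<omega> - c * sin (\<omega> * 0) / \<omega>"
  proof (subst zero_ereal_def, rule interval_integral_FTC_finite)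
    show "continuous_on {min 0 t..max 0 t} (\<lambda>s. c * cos (\<omega> * s))"
      by (intro continuous_intros)
    fix s
    have "((\<lambda>s. c * sin (\<omega> * s) / \<omega>) has_real_derivative c * cos (\<omega> * s)) (at s)"
      using assms by (auto intro!: derivative_eq_intros)
    then show "((\<lambda>s. c * sin (\<omega> * s) / \<omega>) has_vector_derivative c * cos (\<omega> * s)) (at s within {min 0 t..max 0 t})"
      by (simp add: has_real_derivative_iff_has_vector_derivative has_vector_derivative_at_within)
  qed
  then show ?thesis by simp
qed

lemma mode_energy_identity:
  fixes m A Dx Dz \<theta> :: real
  assumes m: "0 < m" and eik: "Dx\<^sup>2 * m = Dz\<^sup>2 * (1 - m)"
  shows "(cos \<theta> * A * Dz)\<^sup>2 + (A * Dz * (sin \<theta> / sqrt m))\<^sup>2 + (cos \<theta> * A * Dx)\<^sup>2 = A\<^sup>2 * Dz\<^sup>2 / m"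
proof -
  have "m * ((cos \<theta> * A * Dz)\<^sup>2 + (A * Dz * (sin \<theta> / sqrt m))\<^sup>2 + (cos \<theta> * A * Dx)\<^sup>2)
      = A\<^sup>2 * ((cos \<theta>)\<^sup>2 * (Dz\<^sup>2 * m + Dx\<^sup>2 * m) + (sin \<theta>)\<^sup>2 * Dz\<^sup>2)"
    using m by (simp add: power_mult_distrib power_divide algebra_simps)
  also have "\<dots> = A\<^sup>2 * Dz\<^sup>2 * ((cos \<theta>)\<^sup>2 + (sin \<theta>)\<^sup>2)" unfolding eik by algebra
  also have "\<dots> = A\<^sup>2 * Dz\<^sup>2" by simp
  finally show ?thesis using m by (simp add: eq_divide_eq ac_simps)
qed

lemma energy_time_invariant_if_psi_locally_single_mode:
  assumes ev: "\<forall>\<^sub>F q in nhds (x, z). \<forall>t. psi ls lss \<sigma> (fst q) (snd q) t = \<epsilon> * psi_primitive ls \<sigma> t (M q) + C t"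
    and eik: "eikonal_at M (x, z)" and m: "ls < M (x, z)" "M (x, z) < lss" and ls: "0 < ls"
    and \<sigma>: "continuous_on {ls..lss} \<sigma>"
  shows "energy ls lss \<sigma> x z t1 = energy ls lss \<sigma> x z t2"
proof -
  define m where "m = M (x, z)"
  obtain Dz Dx where Dz: "((\<lambda>z'. M (x, z')) has_real_derivative Dz) (at z)"
    and Dx: "((\<lambda>x'. M (x', z)) has_real_derivative Dx) (at x)" and rel: "Dx\<^sup>2 * m = Dz\<^sup>2 * (1 - m)"
    using eik unfolding eikonal_at_def m_def by auto
  have m0: "0 < m" using m ls m_def by simp
  have prim: "(psi_primitive ls \<sigma> t has_real_derivative psi_integrand \<sigma> t m) (at m)" for t
    using has_real_derivative_psi_primitive[OF \<sigma>] m unfolding m_def by simp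
  have "((\<lambda>z'. \<epsilon> * psi_primitive ls \<sigma> t (M (x, z')) + C t) has_real_derivative \<epsilon> * (psi_integrand \<sigma> t m * Dz)) (at z)"
    and "((\<lambda>x'. \<epsilon> * psi_primitive ls \<sigma> t (M (x', z)) + C t) has_real_derivative \<epsilon> * (psi_integrand \<sigma> t m * Dx)) (at x)"
    and "\<forall>\<^sub>F q in nhds (x, z). psi ls lss \<sigma> (fst q) (snd q) t = \<epsilon> * psi_primitive ls \<sigma> t (M q) + C t" for t
    using DERIV_chain2[OF prim[unfolded m_def] Dz] DERIV_chain2[OF prim[unfolded m_def] Dx] ev
    unfolding m_def by (auto intro!: derivative_eq_intros elim: eventually_mono)
  note partial_derivs_psi[OF this(3) this(1,2)]
  then have dz: "deriv (\<lambda>z'. psi ls lss \<sigma> x z' s) z = \<epsilon> * (psi_integrand \<sigma> s m * Dz)"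
    and dx: "deriv (\<lambda>x'. psi ls lss \<sigma> x' z s) x = \<epsilon> * (psi_integrand \<sigma> s m * Dx)" for s
    by simp_all
  have "vvel ls lss \<sigma> x z t = (LBINT s=0..t. \<epsilon> * \<sigma> m * Dz * cos (sqrt m * s))" for t
    unfolding vvel_def dz psi_integrand_def by (simp add: algebra_simps)
  then have v: "vvel ls lss \<sigma> x z t = \<epsilon> * \<sigma> m * Dz * (sin (sqrt m * t) / sqrt m)" for t
    using interval_integral_cos[of "sqrt m"] m0 by simp
  have "energy ls lss \<sigma> x z t = (\<epsilon> * \<sigma> m)\<^sup>2 * Dz\<^sup>2 / m" for t
    using mode_energy_identity[OF m0 rel, of "sqrt m * t" "\<epsilon> * \<sigma> m"]
    unfolding energy_def uvel_def wvel_def dz dx v psi_integrand_def by (simp add: algebra_simps)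
  then show ?thesis by simp
qed

section \<open>Local structure of the stream function\<close>

lemma eventually_less_if_isCont:
  fixes f g :: "'a::t2_space \<Rightarrow> real"
  assumes "isCont f p" "isCont g p" "f p < g p"
  shows "\<forall>\<^sub>F q in nhds p. f q < g q"
proof -
  have "((\<lambda>q. g q - f q) \<longlongrightarrow> g p - f p) (nhds p)"
    using assms(1,2) by (simp add: isCont_def tendsto_at_iff_tendsto_nhds[symmetric] tendsto_diff)
  from order_tendstoD(1)[OF this, of 0] show ?thesis using assms(3) by (auto elim: eventually_mono)
qed

lemma eventually_min_eq_branch:
  fixes f g :: "'a::t2_space \<Rightarrow> real"
  assumes "isCont f p" "isCont g p" "f p \<noteq> g p"
  shows "\<exists>h\<in>{f, g}. h p = min (f p) (g p) \<and> (\<forall>\<^sub>F q in nhds p. min (f q) (g q) = h q)"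
proof (cases "f p < g p")
  case True
  then show ?thesis using eventually_less_if_isCont[OF assms(1,2)] by (auto elim: eventually_mono)
next
  case False
  then have "g p < f p" using assms(3) by simp
  then show ?thesis using eventually_less_if_isCont[OF assms(2,1)] by (auto elim: eventually_mono)
qed

lemma eventually_max_eq_branch:
  fixes f g :: "'a::t2_space \<Rightarrow> real"
  assumes "isCont f p" "isCont g p" "f p \<noteq> g p"
  shows "\<exists>h\<in>{f, g}. h p = max (f p) (g p) \<and> (\<forall>\<^sub>F q in nhds p. max (f q) (g q) = h q)"
proof (cases "f p < g p")
  case True
  then show ?thesis using eventually_less_if_isCont[OF assms(1,2)] by (auto elim: eventually_mono)
next
  case False
  then have "g p < f p" using assms(3) by simp
  then show ?thesis using eventually_less_if_isCont[OF assms(2,1)] by (auto elim: eventually_mono)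
qed

lemma eventually_clamp_const:
  fixes f :: "'a::t2_space \<Rightarrow> real"
  assumes "isCont f p" "f p < lo \<or> hi < f p" "lo \<le> hi"
  shows "\<forall>\<^sub>F q in nhds p. clamp_to lo hi (f q) = clamp_to lo hi (f p)"
  using assms(2)
proof
  assume "f p < lo"
  then have "\<forall>\<^sub>F q in nhds p. f q < lo"
    using eventually_less_if_isCont[where g="\<lambda>_. lo", OF assms(1) continuous_const] by simp
  then show ?thesis using \<open>f p < lo\<close> by (auto simp: clamp_to_def elim!: eventually_mono)
next
  assume "hi < f p"
  then have "\<forall>\<^sub>F q in nhds p. hi < f q"
    using eventually_less_if_isCont[where f="\<lambda>_. hi", OF continuous_const assms(1)] by simp
  then show ?thesis using \<open>hi < f p\<close> assms(3) by (auto simp: clamp_to_def elim!: eventually_mono)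
qed

lemma eventually_clamp_eq:
  fixes f :: "'a::t2_space \<Rightarrow> real"
  assumes "isCont f p" "lo < f p" "f p < hi"
  shows "\<forall>\<^sub>F q in nhds p. clamp_to lo hi (f q) = f q \<and> lo < f q \<and> f q < hi"
proof -
  have "\<forall>\<^sub>F q in nhds p. lo < f q" "\<forall>\<^sub>F q in nhds p. f q < hi"
    using eventually_less_if_isCont[where f="\<lambda>_. lo", OF continuous_const assms(1)]
      eventually_less_if_isCont[where g="\<lambda>_. hi", OF assms(1) continuous_const] assms(2,3)
    by simp_all
  then show ?thesis by eventually_elim (auto simp: clamp_to_def)
qed

lemma isCont_lam_sides:
  "isCont lam_BD p" "isCont lam_CA p" "isCont lam_AB p" "isCont lam_DC p"
proof -
  have ne: "1 + y\<^sup>2 \<noteq> 0" for y :: real by (smt (verit) zero_le_power2)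
  show "isCont lam_BD p" "isCont lam_CA p" "isCont lam_AB p" "isCont lam_DC p"
    unfolding lam_BD_def lam_CA_def lam_AB_def lam_DC_def a_BD_def a_CA_def a_AB_def a_DC_def
      quad_root_def lam_of_def
    by (intro continuous_intros ne | simp)+
qed

lemma isCont_lam_hi_lo: "isCont lam_hi p" "isCont lam_lo p"
  unfolding lam_hi_def[abs_def] lam_lo_def[abs_def] by (intro continuous_intros isCont_lam_sides)+

lemma eventually_lam_hi_eq_side:
  assumes "p \<in> Dom" "1/2 < lam_hi p" "lam_hi p < 4/5"
  shows "\<exists>M\<in>{lam_BD, lam_CA}. \<forall>\<^sub>F q in nhds p. lam_hi q = M q"
proof -
  have "lam_BD p \<noteq> lam_CA p"
  proof
    assume "lam_BD p = lam_CA p"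
    then show False using lam_BD_eq_lam_CA[OF assms(1)] assms(2,3) by (simp add: lam_hi_def)
  qed
  from eventually_min_eq_branch[OF isCont_lam_sides(1,2) this] show ?thesis
    unfolding lam_hi_def by blast
qed

lemma eventually_lam_lo_eq_side:
  assumes "p \<in> Dom" "1/2 < lam_lo p"
  shows "\<exists>M\<in>{lam_AB, lam_DC}. \<forall>\<^sub>F q in nhds p. lam_lo q = M q"
proof -
  have "lam_AB p \<noteq> lam_DC p"
    using lam_AB_ne_lam_DC[OF assms(1)] assms(2) by (auto simp: lam_lo_def)
  from eventually_max_eq_branch[OF isCont_lam_sides(3,4) this] show ?thesis
    unfolding lam_lo_def by blast
qed

lemma eikonal_at_side:
  "M \<in> {lam_BD, lam_CA, lam_AB, lam_DC} \<Longrightarrow> q \<in> Dom \<Longrightarrow> 1/2 < M q \<Longrightarrow> eikonal_at M q"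
  using eikonal_at_lam_BD eikonal_at_lam_CA eikonal_at_lam_AB eikonal_at_lam_DC by blast

lemma Omega0_subset_Dom: "Omega0 ls lss \<subseteq> Dom"
  unfolding Omega0_def Let_def using interior_subset by blast

lemma open_Dom: "open Dom"
proof -
  have "Dom = {q. -1 < snd q} \<inter> {q. snd q < 0} \<inter> {q. -1 < fst q} \<inter> {q::real \<times> real. fst q < snd q + 1}"
    unfolding Dom_def by auto
  also have "open \<dots>" by (intro open_Int open_Collect_less continuous_intros)
  finally show ?thesis .
qed

lemma Omega0_disjoint_corners:
  assumes "p \<in> Omega0 ls lss"
  shows "p \<notin> interior (sweep side_CA ls lss \<inter> sweep side_DC ls lss)"
    and "p \<notin> interior (sweep side_CA ls lss \<inter> sweep side_AB ls lss)"
    and "p \<notin> interior (sweep side_AB ls lss \<inter> sweep side_BD ls lss)"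
    and "p \<notin> interior (sweep side_BD ls lss \<inter> sweep side_DC ls lss)"
  using assms interior_subset unfolding Omega0_eq by blast+

text \<open>Near a point of \<open>\<Omega>\<^sub>0\<close> at most one side of the rectangles sweeps by: two would put the
  point in one of the corner regions \<open>D\<^sub>1, \<dots>, D\<^sub>4\<close>.\<close>

lemma Omega0_no_two_active_sides:
  assumes p: "p \<in> Omega0 ls lss" and range: "1/2 < ls" "lss < 4/5"
    and M: "M \<in> {lam_BD, lam_CA}" and M': "M' \<in> {lam_AB, lam_DC}"
    and ev: "\<forall>\<^sub>F q in nhds p. q \<in> Dom \<and> ls < M' q \<and> M' q < M q \<and> M q < lss
               \<and> lam_hi q = M q \<and> lam_lo q = M' q"
  shows False
proof -
  obtain S where S: "open S" "p \<in> S"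
    and inS: "\<And>q. q \<in> S \<Longrightarrow> q \<in> Dom \<and> ls < M' q \<and> M' q < M q \<and> M q < lss \<and> lam_hi q = M q \<and> lam_lo q = M' q"
    using ev unfolding eventually_nhds by blast
  have hi: "S \<subseteq> sweep side_BD ls lss" if "M = lam_BD"
  proof
    fix q assume "q \<in> S"
    from inS[OF this] that show "q \<in> sweep side_BD ls lss" by (intro mem_sweep_if_lam_eq(1)[OF range, of q "lam_BD q"]) auto
  qed
  have hi': "S \<subseteq> sweep side_CA ls lss" if "M = lam_CA"
  proof
    fix q assume "q \<in> S"
    from inS[OF this] that show "q \<in> sweep side_CA ls lss" by (intro mem_sweep_if_lam_eq(2)[OF range, of q "lam_CA q"]) auto
  qed
  have lo: "S \<subseteq> sweep side_AB ls lss" if "M' = lam_AB"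
  proof
    fix q assume "q \<in> S"
    from inS[OF this] that show "q \<in> sweep side_AB ls lss" by (intro mem_sweep_if_lam_eq(3)[OF range, of q "lam_AB q"]) auto
  qed
  have lo': "S \<subseteq> sweep side_DC ls lss" if "M' = lam_DC"
  proof
    fix q assume "q \<in> S"
    from inS[OF this] that show "q \<in> sweep side_DC ls lss" by (intro mem_sweep_if_lam_eq(4)[OF range, of q "lam_DC q"]) auto
  qed
  have corner: "p \<in> interior (A \<inter> B)" if "S \<subseteq> A" "S \<subseteq> B" for A B
    using interiorI[OF S, of "A \<inter> B"] that by blast
  from M M' show False using Omega0_disjoint_corners[OF p] corner hi hi' lo lo' by auto
qed

definition psi_locally_time_only :: "real \<Rightarrow> real \<Rightarrow> (real \<Rightarrow> real) \<Rightarrow> real \<times> real \<Rightarrow> bool" where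
  "psi_locally_time_only ls lss \<sigma> p \<longleftrightarrow>
     (\<exists>C. \<forall>\<^sub>F q in nhds p. \<forall>t. psi ls lss \<sigma> (fst q) (snd q) t = C t)"

definition psi_locally_single_mode :: "real \<Rightarrow> real \<Rightarrow> (real \<Rightarrow> real) \<Rightarrow> real \<times> real \<Rightarrow> bool" where
  "psi_locally_single_mode ls lss \<sigma> p \<longleftrightarrow>
     (\<exists>\<epsilon> M C. M \<in> {lam_BD, lam_CA, lam_AB, lam_DC} \<and> ls < M p \<and> M p < lss \<and>
        (\<forall>\<^sub>F q in nhds p. \<forall>t. psi ls lss \<sigma> (fst q) (snd q) t = \<epsilon> * psi_primitive ls \<sigma> t (M q) + C t))"

lemma psi_locally_time_onlyI:
  "\<forall>\<^sub>F q in nhds p. \<forall>t. psi ls lss \<sigma> (fst q) (snd q) t = C t \<Longrightarrow> psi_locally_time_only ls lss \<sigma> p"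
  unfolding psi_locally_time_only_def by blast

lemma psi_locally_single_modeI:
  "\<forall>\<^sub>F q in nhds p. \<forall>t. psi ls lss \<sigma> (fst q) (snd q) t = \<epsilon> * psi_primitive ls \<sigma> t (M q) + C t \<Longrightarrow>
    M \<in> {lam_BD, lam_CA, lam_AB, lam_DC} \<Longrightarrow> ls < M p \<Longrightarrow> M p < lss \<Longrightarrow> psi_locally_single_mode ls lss \<sigma> p"
  unfolding psi_locally_single_mode_def by blast

lemma energy_time_invariant_if_local_form:
  assumes p: "p \<in> Dom" and ls: "1/2 < ls" and \<sigma>: "continuous_on {ls..lss} \<sigma>"
    and form: "psi_locally_time_only ls lss \<sigma> p \<or> psi_locally_single_mode ls lss \<sigma> p"
  shows "energy ls lss \<sigma> (fst p) (snd p) t1 = energy ls lss \<sigma> (fst p) (snd p) t2"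
  using form
proof
  assume "psi_locally_time_only ls lss \<sigma> p"
  then obtain C where "\<forall>\<^sub>F q in nhds (fst p, snd p). \<forall>t. psi ls lss \<sigma> (fst q) (snd q) t = C t"
    unfolding psi_locally_time_only_def by auto
  from energy_eq_0_if_psi_locally_time_only[OF this] show ?thesis by simp
next
  assume "psi_locally_single_mode ls lss \<sigma> p"
  then obtain \<epsilon> M C where M: "M \<in> {lam_BD, lam_CA, lam_AB, lam_DC}" "ls < M p" "M p < lss"
    and ev: "\<forall>\<^sub>F q in nhds (fst p, snd p). \<forall>t. psi ls lss \<sigma> (fst q) (snd q) t = \<epsilon> * psi_primitive ls \<sigma> t (M q) + C t"
    unfolding psi_locally_single_mode_def by auto
  have "eikonal_at M (fst p, snd p)" using eikonal_at_side[OF M(1) p] M(2) ls by simp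
  from energy_time_invariant_if_psi_locally_single_mode[OF ev this] M ls \<sigma>
  show ?thesis by simp
qed

context
  fixes ls lss :: real and \<sigma> :: "real \<Rightarrow> real" and p :: "real \<times> real"
  assumes range: "1/2 < ls" "ls < lss" "lss < 4/5" and \<sigma>: "continuous_on {ls..lss} \<sigma>"
    and p: "p \<in> Dom" and off_lines: "p \<notin> side_lines ls" "p \<notin> side_lines lss"
begin

lemma eventually_psi_eq_clamped:
  "\<forall>\<^sub>F q in nhds p. \<forall>t. psi ls lss \<sigma> (fst q) (snd q) t = psi_primitive ls \<sigma> t (clamp_to ls lss (lam_hi q))
      - psi_primitive ls \<sigma> t (clamp_to ls lss (min (lam_lo q) (lam_hi q)))"
proof -
  have "\<forall>\<^sub>F q in nhds p. q \<in> Dom" using open_Dom p eventually_nhds_in_open by blast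
  then show ?thesis using psi_eq_psi_primitive[OF _ range(1) _ _ \<sigma>] range by (auto elim: eventually_mono)
qed

lemma lam_hi_lo_not_ends: "lam_hi p \<noteq> ls" "lam_hi p \<noteq> lss" "lam_lo p \<noteq> ls" "lam_lo p \<noteq> lss"
proof -
  have "lam_hi p \<in> {lam_BD p, lam_CA p}" "lam_lo p \<in> {lam_AB p, lam_DC p}"
    by (auto simp: lam_hi_def lam_lo_def min_def max_def)
  moreover have "l \<notin> {lam_BD p, lam_CA p, lam_AB p, lam_DC p}" if "l = ls \<or> l = lss" for l
    using mem_side_lines[OF p, of l] off_lines range that by auto
  ultimately show "lam_hi p \<noteq> ls" "lam_hi p \<noteq> lss" "lam_lo p \<noteq> ls" "lam_lo p \<noteq> lss"
    by blast+
qed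

lemma psi_local_form_if_lam_hi_outside:
  assumes out: "lam_hi p < ls \<or> lss < lam_hi p"
  shows "psi_locally_time_only ls lss \<sigma> p \<or> psi_locally_single_mode ls lss \<sigma> p"
proof -
  define G where "G q = min (lam_lo q) (lam_hi q)" for q
  have G: "isCont G p" unfolding G_def by (intro continuous_intros isCont_lam_hi_lo)
  have hi: "\<forall>\<^sub>F q in nhds p. clamp_to ls lss (lam_hi q) = clamp_to ls lss (lam_hi p)"
    using eventually_clamp_const[OF isCont_lam_hi_lo(1) out] range by simp
  note ev = eventually_psi_eq_clamped[folded G_def]
  show ?thesis
  proof (cases "ls < G p \<and> G p < lss")
    case False
    then have "G p < ls \<or> lss < G p" using lam_hi_lo_not_ends by (auto simp: G_def min_def)
    from eventually_clamp_const[OF G this] range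
    have "\<forall>\<^sub>F q in nhds p. clamp_to ls lss (G q) = clamp_to ls lss (G p)" by simp
    with hi ev have "\<forall>\<^sub>F q in nhds p. \<forall>t. psi ls lss \<sigma> (fst q) (snd q) t
        = psi_primitive ls \<sigma> t (clamp_to ls lss (lam_hi p)) - psi_primitive ls \<sigma> t (clamp_to ls lss (G p))"
      by eventually_elim simp
    then have "psi_locally_time_only ls lss \<sigma> p" by (rule psi_locally_time_onlyI)
    then show ?thesis ..
  next
    case True
    then have lo_p: "lam_lo p < lam_hi p" "ls < lam_lo p" "lam_lo p < lss"
      using out by (auto simp: G_def min_def split: if_splits)
    then obtain M where M: "M \<in> {lam_AB, lam_DC}" "\<forall>\<^sub>F q in nhds p. lam_lo q = M q"
      using eventually_lam_lo_eq_side[OF p] range by auto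
    have "\<forall>\<^sub>F q in nhds p. lam_lo q < lam_hi q"
      using eventually_less_if_isCont[OF isCont_lam_hi_lo(2,1) lo_p(1)] .
    moreover have "\<forall>\<^sub>F q in nhds p. clamp_to ls lss (lam_lo q) = lam_lo q"
      using eventually_clamp_eq[OF isCont_lam_hi_lo(2) lo_p(2,3)] by (auto elim: eventually_mono)
    ultimately have "\<forall>\<^sub>F q in nhds p. \<forall>t. psi ls lss \<sigma> (fst q) (snd q) t
        = (-1) * psi_primitive ls \<sigma> t (M q) + psi_primitive ls \<sigma> t (clamp_to ls lss (lam_hi p))"
      using hi ev M(2) unfolding G_def by eventually_elim simp
    moreover have "M \<in> {lam_BD, lam_CA, lam_AB, lam_DC}" "ls < M p" "M p < lss"
      using lo_p M eventually_nhds_x_imp_x by fastforce+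
    ultimately have "psi_locally_single_mode ls lss \<sigma> p" by (rule psi_locally_single_modeI)
    then show ?thesis ..
  qed
qed

lemma not_in_Omega0_if_lam_lo_inside:
  assumes lo: "ls < lam_lo p" "lam_lo p < lam_hi p" and hi: "lam_hi p < lss"
  shows "p \<notin> Omega0 ls lss"
proof
  assume Omega0: "p \<in> Omega0 ls lss"
  obtain M where M: "M \<in> {lam_BD, lam_CA}" "\<forall>\<^sub>F q in nhds p. lam_hi q = M q"
    using eventually_lam_hi_eq_side[OF p] lo hi range by auto
  obtain M' where M': "M' \<in> {lam_AB, lam_DC}" "\<forall>\<^sub>F q in nhds p. lam_lo q = M' q"
    using eventually_lam_lo_eq_side[OF p] lo range by auto
  have "\<forall>\<^sub>F q in nhds p. lam_lo q < lam_hi q"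
    using eventually_less_if_isCont[OF isCont_lam_hi_lo(2,1) lo(2)] .
  moreover have "\<forall>\<^sub>F q in nhds p. ls < lam_lo q"
    using eventually_less_if_isCont[where f="\<lambda>_. ls", OF continuous_const isCont_lam_hi_lo(2)] lo(1) by simp
  moreover have "\<forall>\<^sub>F q in nhds p. lam_hi q < lss"
    using eventually_less_if_isCont[where g="\<lambda>_. lss", OF isCont_lam_hi_lo(1) continuous_const] hi by simp
  moreover have "\<forall>\<^sub>F q in nhds p. q \<in> Dom" using open_Dom p eventually_nhds_in_open by blast
  ultimately have "\<forall>\<^sub>F q in nhds p. q \<in> Dom \<and> ls < M' q \<and> M' q < M q \<and> M q < lss
      \<and> lam_hi q = M q \<and> lam_lo q = M' q"
    using M(2) M'(2) by eventually_elim auto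
  with Omega0_no_two_active_sides[OF Omega0 _ _ M(1) M'(1)] range show False by simp
qed

lemma psi_local_form_if_lam_hi_inside:
  assumes inside: "ls < lam_hi p" "lam_hi p < lss" and Omega0: "p \<in> Omega0 ls lss"
  shows "psi_locally_time_only ls lss \<sigma> p \<or> psi_locally_single_mode ls lss \<sigma> p"
proof -
  obtain M where M: "M \<in> {lam_BD, lam_CA}" "\<forall>\<^sub>F q in nhds p. lam_hi q = M q"
    using eventually_lam_hi_eq_side[OF p] inside range by auto
  have M_p: "M \<in> {lam_BD, lam_CA, lam_AB, lam_DC}" "ls < M p" "M p < lss"
    using M inside eventually_nhds_x_imp_x by fastforce+
  have hi: "\<forall>\<^sub>F q in nhds p. clamp_to ls lss (lam_hi q) = lam_hi q \<and> ls < lam_hi q \<and> lam_hi q < lss"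
    by (rule eventually_clamp_eq[OF isCont_lam_hi_lo(1) inside])
  note ev = eventually_psi_eq_clamped
  have "lam_lo p \<noteq> lam_hi p" using lam_lo_ne_lam_hi[OF p] inside range by simp
  then consider "lam_hi p < lam_lo p" | "lam_lo p < lam_hi p" "lam_lo p < ls"
    | "lam_lo p < lam_hi p" "ls < lam_lo p"
    using lam_hi_lo_not_ends by linarith
  then show ?thesis
  proof cases
    case 1
    from eventually_less_if_isCont[OF isCont_lam_hi_lo(1,2) this] ev
    have "\<forall>\<^sub>F q in nhds p. \<forall>t. psi ls lss \<sigma> (fst q) (snd q) t = 0"
      by eventually_elim simp
    then have "psi_locally_time_only ls lss \<sigma> p" by (rule psi_locally_time_onlyI)
    then show ?thesis ..
  next
    case 2
    have "\<forall>\<^sub>F q in nhds p. lam_lo q < lam_hi q"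
      using eventually_less_if_isCont[OF isCont_lam_hi_lo(2,1) 2(1)] .
    moreover have "\<forall>\<^sub>F q in nhds p. clamp_to ls lss (lam_lo q) = clamp_to ls lss (lam_lo p)"
      using eventually_clamp_const[OF isCont_lam_hi_lo(2)] 2(2) range by simp
    ultimately have "\<forall>\<^sub>F q in nhds p. \<forall>t. psi ls lss \<sigma> (fst q) (snd q) t
        = 1 * psi_primitive ls \<sigma> t (M q) + - psi_primitive ls \<sigma> t (clamp_to ls lss (lam_lo p))"
      using hi M(2) ev by eventually_elim simp
    from psi_locally_single_modeI[OF this M_p] show ?thesis ..
  next
    case 3
    then show ?thesis using not_in_Omega0_if_lam_lo_inside[OF _ _ inside(2)] Omega0 by blast
  qed
qed

end

lemma energy_time_invariant_in_Omega0:
  assumes range: "1/2 < ls" "ls < lss" "lss < 4/5" and \<sigma>: "continuous_on {ls..lss} \<sigma>"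
    and Omega0: "p \<in> Omega0 ls lss" and off_lines: "p \<notin> side_lines ls" "p \<notin> side_lines lss"
  shows "energy ls lss \<sigma> (fst p) (snd p) t1 = energy ls lss \<sigma> (fst p) (snd p) t2"
proof (rule energy_time_invariant_if_local_form)
  show p: "p \<in> Dom" using Omega0 Omega0_subset_Dom by blast
  note local = range \<sigma> p off_lines
  show "psi_locally_time_only ls lss \<sigma> p \<or> psi_locally_single_mode ls lss \<sigma> p"
  proof (cases "ls < lam_hi p \<and> lam_hi p < lss")
    case True
    then show ?thesis using psi_local_form_if_lam_hi_inside[OF local] Omega0 by blast
  next
    case False
    then have "lam_hi p < ls \<or> lss < lam_hi p" using lam_hi_lo_not_ends[OF local] by linarith
    then show ?thesis by (rule psi_local_form_if_lam_hi_outside[OF local])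
  qed
qed (use range \<sigma> in auto)

lemma continuous_on_if_C1_on_closed: "C1_on_closed S f \<Longrightarrow> continuous_on S f"
  unfolding C1_on_closed_def by (auto intro: DERIV_continuous_on)

theorem theorem4p3:
  fixes ls lss :: real and \<sigma>0 :: "real \<Rightarrow> real" and \<Omega>1 :: "(real \<times> real) set"
    and t1 t2 :: real
  assumes "1/2 < ls" and "ls < lss" and "lss < 4/5"
    and "C1_on_closed {1/2..4/5} \<sigma>0"
    and "lipschitz_domain \<Omega>1" and "\<Omega>1 \<subseteq> Omega0 ls lss"
  shows "integral \<Omega>1 (\<lambda>(x, z). (uvel ls lss \<sigma>0 x z t1)\<^sup>2 + (vvel ls lss \<sigma>0 x z t1)\<^sup>2 + (wvel ls lss \<sigma>0 x z t1)\<^sup>2)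
       = integral \<Omega>1 (\<lambda>(x, z). (uvel ls lss \<sigma>0 x z t2)\<^sup>2 + (vvel ls lss \<sigma>0 x z t2)\<^sup>2 + (wvel ls lss \<sigma>0 x z t2)\<^sup>2)"
proof -
  have \<sigma>: "continuous_on {ls..lss} \<sigma>0"
    using continuous_on_if_C1_on_closed[OF assms(4)] by (rule continuous_on_subset) (use assms(1-3) in auto)
  show ?thesis
  proof (rule integral_spike[OF negligible_Un[OF negligible_side_lines negligible_side_lines]])
    fix q assume "q \<in> \<Omega>1 - (side_lines ls \<union> side_lines lss)"
    then have "energy ls lss \<sigma>0 (fst q) (snd q) t2 = energy ls lss \<sigma>0 (fst q) (snd q) t1"
      using energy_time_invariant_in_Omega0[OF assms(1-3) \<sigma>] assms(6) by blast
    then show "(\<lambda>(x, z). (uvel ls lss \<sigma>0 x z t2)\<^sup>2 + (vvel ls lss \<sigma>0 x z t2)\<^sup>2 + (wvel ls lss \<sigma>0 x z t2)\<^sup>2) q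
             = (\<lambda>(x, z). (uvel ls lss \<sigma>0 x z t1)\<^sup>2 + (vvel ls lss \<sigma>0 x z t1)\<^sup>2 + (wvel ls lss \<sigma>0 x z t1)\<^sup>2) q"
      by (simp add: energy_def case_prod_beta)
  qed
qed

end
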